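(* Let $X$ be a topologically complete space and let $\mathcal A$ be a family of closed, locally finite, normal covers of $X$ satisfying conditions (I) and (II) below. Let $Y$ be a closed subset of $X$, and for $\alpha\in\mathcal A$ put $\alpha|Y=\{F\cap Y : F\in\alpha\}$ and $\mathcal A|Y=\{\alpha|Y:\alpha\in\mathcal A\}$. Then the family $\mathcal A|Y$ of covers of $Y$ satisfies conditions (I) and (II) with $X$ replaced by $Y$ (and open sets of $Y$ taken in the subspace topology), namely: (I$_Y$) for each open subset $U$ of $Y$ and each $x\in U$ there is $\alpha\in\mathcal A$ with $\bigcup\mathrm{star}_{\alpha|Y}(x)\subset U$; (II$_Y$) if for each $\alpha\in\mathcal A$ a member $f(\alpha)\in\alpha$ is chosen such that the collection $\{f(\alpha)\cap Y\}_{\alpha\in\mathcal A}$ has the finite intersection property, then $\bigcap_{\alpha\in\mathcal A}(f(\alpha)\cap Y)\neq\emptyset$.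
   Context: A topologically complete space is a Tychonoff space that is complete with respect to its finest uniformity. A cover $\alpha$ of $X$ is a closed, locally finite, normal cover if its members are closed, it is locally finite, and there is a partition of unity $\{\phi_{\alpha,V}:V\in\alpha\}$ subordinated to it: continuous $\phi_{\alpha,V}:X\to[0,1]$ with $\mathrm{cl}(\phi_{\alpha,V}^{-1}((0,1]))\subset\mathrm{int}(V)$ and $\sum_{V\in\alpha}\phi_{\alpha,V}=1$. For a cover $\alpha$ of a space and a subset $S$, $\mathrm{star}_\alpha(S)=\{V\in\alpha: V\cap S\neq\emptyset\}$, $\mathrm{star}_\alpha(x)=\mathrm{star}_\alpha(\{x\})$, and $\bigcup$ of a collection denotes the union of its members. Conditions on $\mathcal A$: (I) for each open $U\subset X$ and each $x\in U$ there exists $\alpha\in\mathcal A$ with $\bigcup\mathrm{star}_\alpha(x)\subset U$; (II) whenever a member $f(\alpha)\in\alpha$ is selected for each $\alpha\in\mathcal A$ and the collection $\{f(\alpha)\}$ has the finite intersection property, then $\bigcap_{\alpha\in\mathcal A}f(\alpha)\neq\emptyset$. *)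

theory Defs
  imports "HOL-Analysis.Analysis"
begin

definition tychonoff_space :: "'a topology \<Rightarrow> bool" where
  "tychonoff_space X \<longleftrightarrow> completely_regular_space X \<and> Hausdorff_space X"

text \<open>Continuous pseudometrics on X; for a Tychonoff space they generate the finest
  (fine) uniformity compatible with the topology.\<close>
definition continuous_pseudometric :: "'a topology \<Rightarrow> ('a \<Rightarrow> 'a \<Rightarrow> real) \<Rightarrow> bool" where
  "continuous_pseudometric X d \<longleftrightarrow>
     continuous_map (prod_topology X X) euclideanreal (\<lambda>(x, y). d x y) \<and>
     (\<forall>x\<in>topspace X. d x x = 0) \<and>
     (\<forall>x\<in>topspace X. \<forall>y\<in>topspace X. 0 \<le> d x y \<and> d x y = d y x) \<and>
     (\<forall>x\<in>topspace X. \<forall>y\<in>topspace X. \<forall>z\<in>topspace X. d x z \<le> d x y + d y z)"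

definition fine_cauchy_filter :: "'a topology \<Rightarrow> 'a filter \<Rightarrow> bool" where
  "fine_cauchy_filter X F \<longleftrightarrow>
     F \<noteq> bot \<and> eventually (\<lambda>x. x \<in> topspace X) F \<and>
     (\<forall>d e. continuous_pseudometric X d \<and> e > 0 \<longrightarrow>
        (\<exists>A. A \<subseteq> topspace X \<and> eventually (\<lambda>x. x \<in> A) F \<and>
             (\<forall>x\<in>A. \<forall>y\<in>A. d x y < e)))"

definition topologically_complete :: "'a topology \<Rightarrow> bool" where
  "topologically_complete X \<longleftrightarrow> tychonoff_space X \<and>
     (\<forall>F. fine_cauchy_filter X F \<longrightarrow> (\<exists>x. limitin X id x F))"

definition locally_finite_in :: "'a topology \<Rightarrow> 'a set set \<Rightarrow> bool" where
  "locally_finite_in X \<alpha> \<longleftrightarrow>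
     (\<forall>x\<in>topspace X. \<exists>W. openin X W \<and> x \<in> W \<and> finite {V\<in>\<alpha>. V \<inter> W \<noteq> {}})"

text \<open>Closed, locally finite, normal cover (with a subordinated partition of unity).\<close>
definition closed_lf_normal_cover :: "'a topology \<Rightarrow> 'a set set \<Rightarrow> bool" where
  "closed_lf_normal_cover X \<alpha> \<longleftrightarrow>
     (\<forall>V\<in>\<alpha>. closedin X V) \<and> \<Union>\<alpha> = topspace X \<and> locally_finite_in X \<alpha> \<and>
     (\<exists>\<phi> :: 'a set \<Rightarrow> 'a \<Rightarrow> real.
        (\<forall>V\<in>\<alpha>. continuous_map X euclideanreal (\<phi> V) \<and>
                 (\<forall>x\<in>topspace X. 0 \<le> \<phi> V x \<and> \<phi> V x \<le> 1) \<and>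
                 X closure_of {x\<in>topspace X. \<phi> V x > 0} \<subseteq> X interior_of V) \<and>
        (\<forall>x\<in>topspace X. finite {V\<in>\<alpha>. \<phi> V x \<noteq> 0} \<and>
                         (\<Sum>V\<in>{V\<in>\<alpha>. \<phi> V x \<noteq> 0}. \<phi> V x) = 1))"

definition star_of :: "'a set set \<Rightarrow> 'a set \<Rightarrow> 'a set set" where
  "star_of \<alpha> S = {V\<in>\<alpha>. V \<inter> S \<noteq> {}}"

definition finite_intersection_property :: "'a set set \<Rightarrow> bool" where
  "finite_intersection_property \<C> \<longleftrightarrow>
     (\<forall>\<F>. \<F> \<subseteq> \<C> \<and> finite \<F> \<and> \<F> \<noteq> {} \<longrightarrow> \<Inter>\<F> \<noteq> {})"

definition restrict_cover :: "'a set set \<Rightarrow> 'a set \<Rightarrow> 'a set set" where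
  "restrict_cover \<alpha> Y = (\<lambda>F. F \<inter> Y) ` \<alpha>"

definition condition_I :: "'a topology \<Rightarrow> 'a set set set \<Rightarrow> bool" where
  "condition_I X \<A> \<longleftrightarrow>
     (\<forall>U x. openin X U \<and> x \<in> U \<longrightarrow> (\<exists>\<alpha>\<in>\<A>. \<Union>(star_of \<alpha> {x}) \<subseteq> U))"

definition condition_II :: "'a set set set \<Rightarrow> bool" where
  "condition_II \<A> \<longleftrightarrow>
     (\<forall>f. (\<forall>\<alpha>\<in>\<A>. f \<alpha> \<in> \<alpha>) \<and> finite_intersection_property (f ` \<A>)
          \<longrightarrow> (\<Inter>\<alpha>\<in>\<A>. f \<alpha>) \<noteq> {})"

end

theory Submission
  imports Defs
begin

text \<open>Condition (I) passes to the subspace because the star of a point in the traced cover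
  is the trace of its star in the original cover. For (II), a point common to all selected
  members exists by (II) for \<open>X\<close>; were it outside the closed set \<open>Y\<close>, condition (I) applied
  to the complement of \<open>Y\<close> would give a cover whose selected member misses \<open>Y\<close>, against the
  finite intersection property.\<close>

lemma finite_intersection_property_image_mono:
  assumes sub: "\<And>i. i \<in> I \<Longrightarrow> g i \<subseteq> f i"
    and fip: "finite_intersection_property (g ` I)"
  shows "finite_intersection_property (f ` I)"
  unfolding finite_intersection_property_def
proof (intro allI impI)
  fix \<F> assume \<F>: "\<F> \<subseteq> f ` I \<and> finite \<F> \<and> \<F> \<noteq> {}"
  then obtain J where J: "J \<subseteq> I" "finite J" "\<F> = f ` J"
    by (meson finite_subset_image)
  with \<F> have "g ` J \<subseteq> g ` I" "finite (g ` J)" "g ` J \<noteq> {}"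
    by auto
  with fip have "\<Inter>(g ` J) \<noteq> {}"
    unfolding finite_intersection_property_def by blast
  moreover have "\<Inter>(g ` J) \<subseteq> \<Inter>\<F>"
    using J sub by blast
  ultimately show "\<Inter>\<F> \<noteq> {}"
    by blast
qed

lemma Union_star_of_restrict_cover: "\<Union>(star_of (restrict_cover \<alpha> Y) S) \<subseteq> \<Union>(star_of \<alpha> S) \<inter> Y"
  by (auto simp: star_of_def restrict_cover_def)

lemma condition_I_subtopology:
  assumes "condition_I X \<A>"
  shows "condition_I (subtopology X Y) ((\<lambda>\<alpha>. restrict_cover \<alpha> Y) ` \<A>)"
  unfolding condition_I_def
proof (intro allI impI)
  fix U x assume "openin (subtopology X Y) U \<and> x \<in> U"
  then obtain V where V: "openin X V" "U = V \<inter> Y" "x \<in> V"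
    by (auto simp: openin_subtopology)
  with assms obtain \<alpha> where "\<alpha> \<in> \<A>" "\<Union>(star_of \<alpha> {x}) \<subseteq> V"
    unfolding condition_I_def by blast
  with V Union_star_of_restrict_cover[of \<alpha> Y "{x}"]
  show "\<exists>\<beta>\<in>(\<lambda>\<alpha>. restrict_cover \<alpha> Y) ` \<A>. \<Union>(star_of \<beta> {x}) \<subseteq> U"
    by blast
qed

lemma condition_I_separates_closed:
  assumes "condition_I X \<A>" "closedin X Y" "p \<in> topspace X" "p \<notin> Y"
  obtains \<alpha> where "\<alpha> \<in> \<A>" "\<And>F. F \<in> \<alpha> \<Longrightarrow> p \<in> F \<Longrightarrow> F \<inter> Y = {}"
proof -
  have "openin X (topspace X - Y)"
    using assms(2) by (simp add: closedin_def)
  with assms(1,3,4) obtain \<alpha> where \<alpha>: "\<alpha> \<in> \<A>" and star: "\<Union>(star_of \<alpha> {p}) \<subseteq> topspace X - Y"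
    unfolding condition_I_def by (meson DiffI)
  show thesis
  proof (rule that[OF \<alpha>])
    fix F assume "F \<in> \<alpha>" "p \<in> F"
    then have "F \<in> star_of \<alpha> {p}"
      by (auto simp: star_of_def)
    with star show "F \<inter> Y = {}"
      by blast
  qed
qed

lemma condition_II_trace:
  assumes covers: "\<And>\<alpha>. \<alpha> \<in> \<A> \<Longrightarrow> \<Union>\<alpha> \<subseteq> topspace X"
    and I: "condition_I X \<A>" and II: "condition_II \<A>" and "closedin X Y"
    and f: "\<forall>\<alpha>\<in>\<A>. f \<alpha> \<in> \<alpha>"
    and fip: "finite_intersection_property ((\<lambda>\<alpha>. f \<alpha> \<inter> Y) ` \<A>)"
  shows "(\<Inter>\<alpha>\<in>\<A>. f \<alpha> \<inter> Y) \<noteq> {}"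
proof (cases "\<A> = {}")
  case False
  have "finite_intersection_property (f ` \<A>)"
    using finite_intersection_property_image_mono[OF _ fip] by blast
  with II f obtain p where p: "p \<in> (\<Inter>\<alpha>\<in>\<A>. f \<alpha>)"
    unfolding condition_II_def by blast
  with False f covers have "p \<in> topspace X"
    by blast
  have "p \<in> Y"
  proof (rule ccontr)
    assume "p \<notin> Y"
    then obtain \<alpha> where "\<alpha> \<in> \<A>" "\<And>F. F \<in> \<alpha> \<Longrightarrow> p \<in> F \<Longrightarrow> F \<inter> Y = {}"
      using condition_I_separates_closed[OF I \<open>closedin X Y\<close> \<open>p \<in> topspace X\<close>] by blast
    with f p have "f \<alpha> \<inter> Y = {}"
      by blast
    moreover have "\<Inter>{f \<alpha> \<inter> Y} \<noteq> {}"
      using fip \<open>\<alpha> \<in> \<A>\<close> unfolding finite_intersection_property_def by blast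
    ultimately show False
      by simp
  qed
  with p show ?thesis
    by blast
qed simp

theorem proposition2p1:
  fixes X :: "'a topology" and \<A> :: "'a set set set" and Y :: "'a set"
  assumes "topologically_complete X"
    and "\<forall>\<alpha>\<in>\<A>. closed_lf_normal_cover X \<alpha>"
    and "condition_I X \<A>"
    and "condition_II \<A>"
    and "closedin X Y"
  shows "(\<forall>U x. openin (subtopology X Y) U \<and> x \<in> U \<longrightarrow>
             (\<exists>\<alpha>\<in>\<A>. \<Union>(star_of (restrict_cover \<alpha> Y) {x}) \<subseteq> U))
       \<and> (\<forall>f. (\<forall>\<alpha>\<in>\<A>. f \<alpha> \<in> \<alpha>) \<and>
               finite_intersection_property ((\<lambda>\<alpha>. f \<alpha> \<inter> Y) ` \<A>)
             \<longrightarrow> (\<Inter>\<alpha>\<in>\<A>. f \<alpha> \<inter> Y) \<noteq> {})"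
proof (intro conjI allI impI)
  show "\<exists>\<alpha>\<in>\<A>. \<Union>(star_of (restrict_cover \<alpha> Y) {x}) \<subseteq> U"
    if "openin (subtopology X Y) U \<and> x \<in> U" for U x
    using condition_I_subtopology[OF assms(3), of Y] that by (simp add: condition_I_def)
next
  have covers: "\<Union>\<alpha> \<subseteq> topspace X" if "\<alpha> \<in> \<A>" for \<alpha>
    using assms(2) that by (simp add: closed_lf_normal_cover_def)
  show "(\<Inter>\<alpha>\<in>\<A>. f \<alpha> \<inter> Y) \<noteq> {}"
    if "(\<forall>\<alpha>\<in>\<A>. f \<alpha> \<in> \<alpha>) \<and> finite_intersection_property ((\<lambda>\<alpha>. f \<alpha> \<inter> Y) ` \<A>)" for f
    using condition_II_trace[OF covers assms(3,4,5)] that by blast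
qed

end
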